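(* Let $G=(V,E)$ be a finite graph with boundary $B\subseteq V$, $|B|\ge 2$. Let $L$ be the Laplacian matrix of $G$ and let $N$ be the principal submatrix of $L$ indexed by $B$, with eigenvalues $\mu_1(N)\le\mu_2(N)\le\cdots\le\mu_{|B|}(N)$. Then $$\sigma_k(G,B)\le\mu_k(N),\qquad k=1,2,\ldots,|B|.$$
   Context: $G=(V,E)$ is a finite undirected graph. A boundary is a subset $B\subseteq V$ with $|B|\ge2$. The Laplacian matrix is $L=D-A$, where $D$ is the diagonal degree matrix and $A$ the adjacency matrix. For $f:V\to\mathbb{R}$, $f\neq0$, the Rayleigh quotient is $R(f)=\frac{\sum_{\{x,y\}\in E}(f(x)-f(y))^2}{\sum_{x\in B}f(x)^2}$, interpreted as $+\infty$ if $f$ vanishes on $B$. For $1\le k\le|B|$, the $k$-th Steklov eigenvalue is $\sigma_k(G,B)=\min_{W\subseteq\mathbb{R}^V,\dim W=k}\max_{0\ne f\in W}R(f)$. *)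

theory Defs
  imports "HOL-Analysis.Analysis" "Jordan_Normal_Form.Char_Poly"
begin

text \<open>Finite undirected simple graph on the finite vertex type 'n (V = UNIV),
  given by a symmetric irreflexive adjacency relation E.\<close>

definition simple_graph :: "('n::finite \<Rightarrow> 'n \<Rightarrow> bool) \<Rightarrow> bool" where
  "simple_graph E \<longleftrightarrow> (\<forall>x y. E x y \<longleftrightarrow> E y x) \<and> (\<forall>x. \<not> E x x)"

definition laplacian :: "('n::finite \<Rightarrow> 'n \<Rightarrow> bool) \<Rightarrow> 'n \<Rightarrow> 'n \<Rightarrow> real" where
  "laplacian E x y =
     (if x = y then real (card {z. E x z}) else 0) - (if E x y then 1 else 0)"

text \<open>Dirichlet energy: sum over edges {x,y} of (f x - f y)^2; each unordered
  edge is counted twice in the ordered double sum, hence the factor 1/2.\<close>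
definition edge_energy :: "('n::finite \<Rightarrow> 'n \<Rightarrow> bool) \<Rightarrow> real^'n \<Rightarrow> real" where
  "edge_energy E f = (\<Sum>x\<in>UNIV. \<Sum>y\<in>{y. E x y}. (f$x - f$y)^2) / 2"

definition rayleigh :: "('n::finite \<Rightarrow> 'n \<Rightarrow> bool) \<Rightarrow> 'n set \<Rightarrow> real^'n \<Rightarrow> ereal" where
  "rayleigh E B f =
     (if (\<Sum>x\<in>B. (f$x)^2) = 0 then \<infinity>
      else ereal (edge_energy E f / (\<Sum>x\<in>B. (f$x)^2)))"

definition steklov :: "('n::finite \<Rightarrow> 'n \<Rightarrow> bool) \<Rightarrow> 'n set \<Rightarrow> nat \<Rightarrow> ereal" where
  "steklov E B k =
     (INF W\<in>{W :: (real^'n) set. subspace W \<and> dim W = k}.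
        SUP f\<in>W - {0}. rayleigh E B f)"

text \<open>Principal submatrix of L indexed by B (rows/columns listed in some fixed
  enumeration of B; the eigenvalues do not depend on the enumeration).\<close>
definition boundary_list :: "'n set \<Rightarrow> 'n list" where
  "boundary_list B = (SOME xs. distinct xs \<and> set xs = B)"

definition principal_submatrix :: "('n \<Rightarrow> 'n \<Rightarrow> real) \<Rightarrow> 'n set \<Rightarrow> real Matrix.mat" where
  "principal_submatrix M B =
     (let xs = boundary_list B
      in Matrix.mat (length xs) (length xs) (\<lambda>(i,j). M (xs!i) (xs!j)))"

text \<open>Eigenvalues with multiplicity (roots of the characteristic polynomial),
  in nondecreasing order; mat_eigenvalue A k = mu_k(A) for 1 <= k <= dim.\<close>
definition mat_eigenvalue :: "real Matrix.mat \<Rightarrow> nat \<Rightarrow> real" where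
  "mat_eigenvalue A k = sorted_list_of_multiset (proots (char_poly A)) ! (k - 1)"

end

theory Submission
  imports Defs
begin

text \<open>On functions supported on B the boundary norm is the full Euclidean norm, and the
  Dirichlet energy is the quadratic form of the compression of L to B, whose matrix in the
  standard basis is N. This compression is self-adjoint, so it has an orthonormal eigenbasis
  with eigenvalues \<mu>_1(N) \<le> ... \<le> \<mu>_|B|(N). On the span of the first k eigenvectors
  the Rayleigh quotient is at most \<mu>_k(N), and this k-dimensional space is admissible in
  the min-max definition of \<sigma>_k.\<close>

section \<open>Spectral theorem for self-adjoint operators\<close>

lemma linear_quadratic_nonneg_imp_zero:
  fixes b c :: real
  assumes nonneg: "\<And>t. 0 \<le> t * b + t\<^sup>2 * c"
  shows "b = 0"
proof (rule ccontr)
  assume "b \<noteq> 0"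
  define a where "a = \<bar>c\<bar> + 1"
  define t where "t = - b / a"
  have "a > 0" and "c \<le> a - 1" unfolding a_def by auto
  have "t * b + t\<^sup>2 * c \<le> t * b + t\<^sup>2 * (a - 1)"
    using \<open>c \<le> a - 1\<close> by (simp add: mult_left_mono)
  also have "\<dots> = - (b / a)\<^sup>2"
    unfolding t_def using \<open>a > 0\<close> by (simp add: field_simps power2_eq_square)
  also have "\<dots> < 0"
    using \<open>b \<noteq> 0\<close> \<open>a > 0\<close> by simp
  finally show False using nonneg[of t] by simp
qed

text \<open>The form l|y|^2 - \<langle>y, T y\<rangle> is nonnegative on S and vanishes at x, so its derivative at x
  in the direction w = l x - T x, which is 2|w|^2, must vanish.\<close>

lemma selfadjoint_max_quadratic_imp_eigenvector:
  fixes T :: "'a::real_inner \<Rightarrow> 'a"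
  assumes lin: "linear T" and sym: "\<And>x y. inner (T x) y = inner x (T y)"
    and S: "subspace S" and inv: "\<And>x. x \<in> S \<Longrightarrow> T x \<in> S"
    and x: "x \<in> S" and le: "\<And>y. y \<in> S \<Longrightarrow> inner y (T y) \<le> l * inner y y"
    and eq: "inner x (T x) = l * inner x x"
  shows "T x = l *\<^sub>R x"
proof -
  define Q where "Q y = l * inner y y - inner y (T y)" for y
  define w where "w = l *\<^sub>R x - T x"
  have w: "w \<in> S" unfolding w_def using S x inv by (simp add: subspace_diff subspace_scale)
  have ww: "l * inner x w - inner w (T x) = inner w w"
    unfolding w_def by (simp add: inner_diff_left inner_diff_right inner_commute algebra_simps)
  have "Q (x + t *\<^sub>R w) = Q x + t * (2 * (l * inner x w - inner w (T x))) + t\<^sup>2 * Q w" for t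
    using lin sym[of x w]
    by (simp add: Q_def linear_add linear_scale algebra_simps power2_eq_square inner_commute)
  then have "Q (x + t *\<^sub>R w) = t * (2 * inner w w) + t\<^sup>2 * Q w" for t
    using eq by (simp add: Q_def ww)
  moreover have "0 \<le> Q (x + t *\<^sub>R w)" for t
    using le[of "x + t *\<^sub>R w"] S x w by (simp add: Q_def subspace_add subspace_scale)
  ultimately have "2 * inner w w = 0"
    by (intro linear_quadratic_nonneg_imp_zero[of _ "Q w"]) metis
  then show ?thesis unfolding w_def by simp
qed

lemma selfadjoint_eigenvector_exists:
  fixes T :: "'a::euclidean_space \<Rightarrow> 'a"
  assumes lin: "linear T" and sym: "\<And>x y. inner (T x) y = inner x (T y)"
    and S: "subspace S" and inv: "\<And>x. x \<in> S \<Longrightarrow> T x \<in> S" and nontrivial: "S \<noteq> {0}"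
  obtains v where "v \<in> S" "norm v = 1" "T v = inner v (T v) *\<^sub>R v"
proof -
  let ?q = "\<lambda>x. inner x (T x)"
  let ?K = "S \<inter> sphere 0 1"
  have "compact ?K"
    using compact_Int_closed[OF compact_sphere closed_subspace[OF S]] by (simp add: Int_commute)
  moreover obtain z where "z \<in> S" "z \<noteq> 0" using nontrivial S subspace_0 by blast
  then have "z /\<^sub>R norm z \<in> ?K" using S by (simp add: subspace_scale)
  then have "?K \<noteq> {}" by blast
  moreover have "continuous_on ?K ?q"
    using linear_continuous_on[OF linear_conv_bounded_linear[THEN iffD1, OF lin]]
    by (intro continuous_intros)
  ultimately obtain v where v: "v \<in> ?K" and max: "\<And>y. y \<in> ?K \<Longrightarrow> ?q y \<le> ?q v"
    using continuous_attains_sup by metis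
  have "?q y \<le> ?q v * inner y y" if y: "y \<in> S" for y
  proof (cases "y = 0")
    case True then show ?thesis using lin by (simp add: linear_0)
  next
    case False
    then have "?q (y /\<^sub>R norm y) \<le> ?q v" using y S by (intro max) (simp add: subspace_scale)
    moreover have "?q (y /\<^sub>R norm y) = ?q y / inner y y"
      using lin False
      by (simp add: linear_scale power2_norm_eq_inner[symmetric] field_simps power2_eq_square)
    ultimately show ?thesis using False by (simp add: divide_le_eq)
  qed
  moreover have "inner v v = 1" using v by (simp add: dot_square_norm)
  ultimately have "T v = ?q v *\<^sub>R v"
    using v by (intro selfadjoint_max_quadratic_imp_eigenvector[OF lin sym S inv]) auto
  then show thesis using v that by auto
qed

lemma dim_orthogonal_complement_less:
  fixes v :: "'a::euclidean_space"
  assumes S: "subspace S" and v: "v \<in> S" "v \<noteq> 0"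
  shows "dim {x \<in> S. inner v x = 0} < dim S"
proof -
  let ?S' = "{x \<in> S. inner v x = 0}"
  have sub: "subspace ?S'" using S by (auto simp: subspace_def inner_add_right)
  have le: "?S' \<subseteq> S" by auto
  have "v \<notin> ?S'" using v by simp
  then have "?S' \<noteq> S" using v by blast
  then show ?thesis
    using subspace_dim_equal[OF sub S le] dim_subset[OF le] by linarith
qed

lemma span_insert_orthogonal_complement:
  fixes v :: "'a::real_inner"
  assumes S: "subspace S" and v: "v \<in> S" "norm v = 1"
    and U: "span U = {x \<in> S. inner v x = 0}"
  shows "span (insert v U) = S"
proof (rule span_subspace)
  show "insert v U \<subseteq> S" using v span_superset[of U] U by auto
  show "S \<subseteq> span (insert v U)"
  proof
    fix x assume "x \<in> S"
    then have "x - inner v x *\<^sub>R v \<in> span U"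
      using S v U by (simp add: subspace_diff subspace_scale inner_diff_right dot_square_norm)
    then show "x \<in> span (insert v U)" using span_breakdown_eq by blast
  qed
qed (rule S)

lemma selfadjoint_orthonormal_eigenbasis:
  fixes T :: "'a::euclidean_space \<Rightarrow> 'a"
  assumes lin: "linear T" and sym: "\<And>x y. inner (T x) y = inner x (T y)"
    and "subspace S" and "\<And>x. x \<in> S \<Longrightarrow> T x \<in> S"
  shows "\<exists>U. U \<subseteq> S \<and> span U = S \<and> pairwise real_inner_class.orthogonal U \<and>
    (\<forall>u\<in>U. norm u = 1 \<and> T u = inner u (T u) *\<^sub>R u)"
  using assms(3,4)
proof (induction "dim S" arbitrary: S rule: less_induct)
  case less
  show ?case
  proof (cases "S = {0}")
    case True
    then show ?thesis by (intro exI[of _ "{}"]) auto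
  next
    case False
    obtain v where v: "v \<in> S" "norm v = 1" "T v = inner v (T v) *\<^sub>R v"
      using selfadjoint_eigenvector_exists[OF lin sym less.prems False] by blast
    define S' where "S' = {x \<in> S. inner v x = 0}"
    have sub: "subspace S'"
      unfolding S'_def using less.prems(1) by (auto simp: subspace_def inner_add_right)
    have inv: "T x \<in> S'" if "x \<in> S'" for x
    proof -
      have "inner v (T x) = inner (T v) x" by (rule sym[symmetric])
      also have "\<dots> = inner v (T v) * inner v x" by (subst v(3)) simp
      finally show ?thesis using that less.prems(2) unfolding S'_def by auto
    qed
    have "dim S' < dim S"
      unfolding S'_def using v by (intro dim_orthogonal_complement_less less.prems) auto
    then obtain U where U: "U \<subseteq> S'" "span U = S'" "pairwise real_inner_class.orthogonal U"
        "\<forall>u\<in>U. norm u = 1 \<and> T u = inner u (T u) *\<^sub>R u"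
      using less.hyps[OF _ sub inv] by blast
    have "span (insert v U) = S"
      using span_insert_orthogonal_complement[OF less.prems(1) v(1,2)] U(2)
      unfolding S'_def .
    moreover have "pairwise real_inner_class.orthogonal (insert v U)"
      using U(1,3) unfolding S'_def
      by (auto simp: pairwise_insert real_inner_class.orthogonal_def inner_commute)
    ultimately show ?thesis
      using U(1,4) v unfolding S'_def by (intro exI[of _ "insert v U"]) auto
  qed
qed

definition sorted_eigenbasis :: "('a::real_inner \<Rightarrow> 'a) \<Rightarrow> 'a set \<Rightarrow> 'a list \<Rightarrow> real list \<Rightarrow> bool" where
  "sorted_eigenbasis T S ws ds \<longleftrightarrow>
     distinct ws \<and> set ws \<subseteq> S \<and> span (set ws) = S \<and>
     pairwise real_inner_class.orthogonal (set ws) \<and> (\<forall>w\<in>set ws. norm w = 1) \<and>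
     length ds = length ws \<and> sorted ds \<and> (\<forall>i<length ws. T (ws ! i) = ds ! i *\<^sub>R ws ! i)"

lemma sorted_eigenbasis_exists:
  fixes T :: "'a::euclidean_space \<Rightarrow> 'a"
  assumes lin: "linear T" and sym: "\<And>x y. inner (T x) y = inner x (T y)"
    and S: "subspace S" and inv: "\<And>x. x \<in> S \<Longrightarrow> T x \<in> S"
  obtains ws ds where "sorted_eigenbasis T S ws ds"
proof -
  obtain U where U: "U \<subseteq> S" "span U = S" "pairwise real_inner_class.orthogonal U"
      "\<And>u. u \<in> U \<Longrightarrow> norm u = 1 \<and> T u = inner u (T u) *\<^sub>R u"
    using selfadjoint_orthonormal_eigenbasis[OF lin sym S inv] by blast
  have "finite U"
    using U(3,4) by (intro independent_imp_finite pairwise_orthogonal_independent) force+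
  then obtain vs where vs: "distinct vs" "set vs = U"
    using finite_distinct_list by blast
  define lam where "lam u = inner u (T u)" for u
  define ws where "ws = sort_key lam vs"
  have ws: "distinct ws" "set ws = U" using vs unfolding ws_def by auto
  have "T (ws ! i) = map lam ws ! i *\<^sub>R ws ! i" if "i < length ws" for i
    using U(4) ws(2) that nth_mem unfolding lam_def by fastforce
  then have "sorted_eigenbasis T S ws (map lam ws)"
    unfolding sorted_eigenbasis_def using ws U by (simp add: ws_def)
  then show thesis by (rule that)
qed

lemma sorted_eigenbasis_independent:
  "sorted_eigenbasis T S ws ds \<Longrightarrow> independent (set ws)"
  unfolding sorted_eigenbasis_def by (intro pairwise_orthogonal_independent) force+

lemma sorted_eigenbasis_length:
  "sorted_eigenbasis T S ws ds \<Longrightarrow> length ws = dim S"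
  using dim_span_eq_card_independent[OF sorted_eigenbasis_independent] distinct_card
  unfolding sorted_eigenbasis_def by metis

lemma sorted_eigenbasis_inner:
  assumes "sorted_eigenbasis T S ws ds" and "i < length ws" and "j < length ws"
  shows "inner (ws ! i) (ws ! j) = (if i = j then 1 else 0)"
  using assms nth_mem nth_eq_iff_index_eq
  unfolding sorted_eigenbasis_def pairwise_def real_inner_class.orthogonal_def
  by (metis dot_square_norm power_one)

lemma quadratic_form_le_on_span_eigenvectors:
  fixes T :: "'a::real_inner \<Rightarrow> 'a"
  assumes lin: "linear T" and fin: "finite U" and orth: "pairwise real_inner_class.orthogonal U"
    and unit: "\<And>u. u \<in> U \<Longrightarrow> norm u = 1"
    and eig: "\<And>u. u \<in> U \<Longrightarrow> \<exists>c\<le>\<mu>. T u = c *\<^sub>R u"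
    and f: "f \<in> span U"
  shows "inner f (T f) \<le> \<mu> * inner f f"
proof -
  obtain lam where lam: "\<And>u. u \<in> U \<Longrightarrow> lam u \<le> \<mu> \<and> T u = lam u *\<^sub>R u"
    using bchoice[of U "\<lambda>u c. c \<le> \<mu> \<and> T u = c *\<^sub>R u"] eig by blast
  obtain c where f_eq: "f = (\<Sum>u\<in>U. c u *\<^sub>R u)" using f span_finite[OF fin] by auto
  have coeff: "inner u (\<Sum>v\<in>U. d v *\<^sub>R v) = d u" if "u \<in> U" for u d
  proof -
    have "inner u (\<Sum>v\<in>U. d v *\<^sub>R v) = (\<Sum>v\<in>U. if v = u then d u else 0)"
      unfolding inner_sum_right using orth unit that
      by (intro sum.cong) (auto simp: pairwise_def real_inner_class.orthogonal_def dot_square_norm)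
    then show ?thesis using fin that by simp
  qed
  have Tf: "T f = (\<Sum>u\<in>U. (c u * lam u) *\<^sub>R u)"
    unfolding f_eq using lin lam by (simp add: linear_sum linear_scale)
  have "inner f (T f) = (\<Sum>u\<in>U. c u * c u * lam u)"
    unfolding Tf by (simp add: f_eq inner_sum_left coeff mult.assoc)
  also have "\<dots> \<le> (\<Sum>u\<in>U. c u * c u * \<mu>)"
    using lam by (intro sum_mono mult_left_mono) auto
  also have "\<dots> = \<mu> * inner f f"
    by (simp add: f_eq inner_sum_left coeff sum_distrib_left mult.commute)
  finally show ?thesis .
qed

lemma dim_span_take_sorted_eigenbasis:
  assumes basis: "sorted_eigenbasis T S ws ds" and k: "k \<le> length ws"
  shows "dim (span (set (take k ws))) = k"
proof -
  have "independent (set (take k ws))"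
    by (rule independent_mono[OF sorted_eigenbasis_independent[OF basis] set_take_subset])
  moreover have "card (set (take k ws)) = k"
    using basis k distinct_card[of "take k ws"] unfolding sorted_eigenbasis_def by simp
  ultimately show ?thesis by (simp add: dim_eq_card_independent)
qed

lemma quadratic_form_le_on_span_take_sorted_eigenbasis:
  fixes T :: "'a::real_inner \<Rightarrow> 'a"
  assumes lin: "linear T" and basis: "sorted_eigenbasis T S ws ds"
    and k: "1 \<le> k" "k \<le> length ws" and f: "f \<in> span (set (take k ws))"
  shows "inner f (T f) \<le> ds ! (k - 1) * inner f f"
proof (rule quadratic_form_le_on_span_eigenvectors[OF lin _ _ _ _ f])
  show "finite (set (take k ws))" by simp
  show "pairwise real_inner_class.orthogonal (set (take k ws))"
    using basis pairwise_subset set_take_subset unfolding sorted_eigenbasis_def by metis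
  show "norm u = 1" if "u \<in> set (take k ws)" for u
    using basis that in_set_takeD unfolding sorted_eigenbasis_def by metis
  show "\<exists>c\<le>ds ! (k - 1). T u = c *\<^sub>R u" if u: "u \<in> set (take k ws)" for u
  proof -
    obtain i where i: "i < k" "u = ws ! i" using u k by (auto simp: in_set_conv_nth)
    then have "T u = ds ! i *\<^sub>R u" using basis k unfolding sorted_eigenbasis_def by simp
    moreover have "ds ! i \<le> ds ! (k - 1)"
      using basis i k unfolding sorted_eigenbasis_def by (intro sorted_nth_mono) auto
    ultimately show ?thesis by blast
  qed
qed

section \<open>The Laplacian quadratic form\<close>

lemma simple_graph_symp: "simple_graph E \<Longrightarrow> symp E"
  unfolding simple_graph_def symp_def by blast

lemma laplacian_symmetric: "symp E \<Longrightarrow> laplacian E x y = laplacian E y x"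
  unfolding laplacian_def by (auto dest: sympD)

lemma sum_neighbours_swap:
  fixes E :: "'n::finite \<Rightarrow> 'n \<Rightarrow> bool" and g :: "'n \<Rightarrow> 'n \<Rightarrow> 'b::comm_monoid_add"
  assumes "symp E"
  shows "(\<Sum>x\<in>UNIV. \<Sum>y\<in>{y. E x y}. g x y) = (\<Sum>x\<in>UNIV. \<Sum>y\<in>{y. E x y}. g y x)"
proof -
  have E: "E x y \<longleftrightarrow> E y x" for x y using assms by (blast dest: sympD)
  have "(\<Sum>x\<in>UNIV. \<Sum>y\<in>{y. E x y}. g x y) = (\<Sum>x\<in>UNIV. \<Sum>y\<in>UNIV. if E x y then g x y else 0)"
    by (simp add: sum.inter_filter[symmetric])
  also have "\<dots> = (\<Sum>y\<in>UNIV. \<Sum>x\<in>UNIV. if E y x then g x y else 0)"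
    by (subst sum.swap) (simp add: E)
  also have "\<dots> = (\<Sum>x\<in>UNIV. \<Sum>y\<in>{y. E x y}. g y x)"
    by (simp add: sum.inter_filter[symmetric])
  finally show ?thesis .
qed

lemma laplacian_row_sum:
  fixes E :: "'n::finite \<Rightarrow> 'n \<Rightarrow> bool"
  shows "(\<Sum>y\<in>UNIV. laplacian E x y * f y) = (\<Sum>y\<in>{y. E x y}. f x - f y)"
proof -
  have "laplacian E x y * f y
      = (if x = y then real (card {z. E x z}) * f y else 0) - (if E x y then f y else 0)" for y
    unfolding laplacian_def by (auto simp: left_diff_distrib)
  then have "(\<Sum>y\<in>UNIV. laplacian E x y * f y)
      = real (card {y. E x y}) * f x - (\<Sum>y\<in>{y. E x y}. f y)"
    by (simp add: sum_subtractf sum.inter_filter[symmetric])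
  also have "\<dots> = (\<Sum>y\<in>{y. E x y}. f x - f y)"
    by (simp add: sum_subtractf)
  finally show ?thesis .
qed

lemma edge_energy_eq_laplacian_form:
  fixes E :: "'n::finite \<Rightarrow> 'n \<Rightarrow> bool"
  assumes "symp E"
  shows "edge_energy E f = (\<Sum>x\<in>UNIV. f$x * (\<Sum>y\<in>UNIV. laplacian E x y * f$y))"
proof -
  have swap: "(\<Sum>x\<in>UNIV. \<Sum>y\<in>{y. E x y}. f$y * (f$y - f$x))
      = (\<Sum>x\<in>UNIV. \<Sum>y\<in>{y. E x y}. f$x * (f$x - f$y))"
    by (rule sum_neighbours_swap[OF assms, symmetric])
  have "(\<Sum>x\<in>UNIV. \<Sum>y\<in>{y. E x y}. (f$x - f$y)\<^sup>2)
      = (\<Sum>x\<in>UNIV. \<Sum>y\<in>{y. E x y}. f$x * (f$x - f$y))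
        + (\<Sum>x\<in>UNIV. \<Sum>y\<in>{y. E x y}. f$y * (f$y - f$x))"
    by (simp add: sum.distrib[symmetric] power2_eq_square algebra_simps)
  also have "\<dots> = 2 * (\<Sum>x\<in>UNIV. f$x * (\<Sum>y\<in>{y. E x y}. f$x - f$y))"
    unfolding swap sum_distrib_left[symmetric] by (rule mult_2[symmetric])
  finally show ?thesis
    unfolding edge_energy_def laplacian_row_sum by simp
qed

section \<open>Compression to the boundary\<close>

definition supported_on :: "'n::finite set \<Rightarrow> (real^'n) set" where
  "supported_on B = {f. \<forall>x. x \<notin> B \<longrightarrow> f$x = 0}"

definition compression :: "('n::finite \<Rightarrow> 'n \<Rightarrow> real) \<Rightarrow> 'n set \<Rightarrow> real^'n \<Rightarrow> real^'n" where
  "compression M B f = (\<chi> x. if x \<in> B then \<Sum>y\<in>B. M x y * f$y else 0)"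

lemma subspace_supported_on: "subspace (supported_on B)"
  unfolding subspace_def supported_on_def by simp

lemma dim_supported_on: "dim (supported_on B) = card B"
  using dim_substandard_cart[where 'a = real, of B] by (simp add: supported_on_def dim_vec_eq)

lemma sum_supported_on:
  fixes f :: "real^'n::finite"
  assumes "f \<in> supported_on B"
  shows "(\<Sum>x\<in>UNIV. f$x * h x) = (\<Sum>x\<in>B. f$x * h x)"
  using assms unfolding supported_on_def by (intro sum.mono_neutral_right) auto

lemma compression_supported_on: "compression M B f \<in> supported_on B"
  unfolding compression_def supported_on_def by simp

lemma linear_compression: "linear (compression M B)"
  by (rule linearI)
     (simp_all add: compression_def Finite_Cartesian_Product.vec_eq_iff sum.distrib sum_distrib_left algebra_simps)

lemma inner_compression:
  "inner g (compression M B f) = (\<Sum>x\<in>B. g$x * (\<Sum>y\<in>B. M x y * f$y))"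
  unfolding inner_vec_def compression_def by (simp add: sum.If_cases if_distrib)

lemma compression_selfadjoint:
  assumes "\<And>x y. M x y = M y x"
  shows "inner (compression M B f) g = inner f (compression M B g)"
proof -
  have "inner g (compression M B f) = (\<Sum>x\<in>B. \<Sum>y\<in>B. f$y * M y x * g$x)"
    unfolding inner_compression using assms by (simp add: sum_distrib_left mult_ac)
  also have "\<dots> = inner f (compression M B g)"
    unfolding inner_compression by (subst sum.swap) (simp add: sum_distrib_left mult_ac)
  finally show ?thesis by (simp add: inner_commute)
qed

lemma quadratic_form_compression:
  assumes "f \<in> supported_on B"
  shows "inner f (compression M B f) = (\<Sum>x\<in>UNIV. f$x * (\<Sum>y\<in>UNIV. M x y * f$y))"
proof -
  have "(\<Sum>y\<in>UNIV. M x y * f$y) = (\<Sum>y\<in>B. M x y * f$y)" for x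
    using sum_supported_on[OF assms, of "M x"] by (simp add: mult.commute)
  then show ?thesis
    unfolding inner_compression by (simp add: sum_supported_on[OF assms])
qed

lemma rayleigh_supported_on:
  assumes "symp E" and f: "f \<in> supported_on B" "f \<noteq> 0"
  shows "rayleigh E B f = ereal (inner f (compression (laplacian E) B f) / inner f f)"
proof -
  have "(\<Sum>x\<in>B. (f$x)\<^sup>2) = inner f f"
    using sum_supported_on[OF f(1), of "\<lambda>x. f$x"] by (simp add: inner_vec_def power2_eq_square)
  then show ?thesis
    using f by (simp add: rayleigh_def edge_energy_eq_laplacian_form[OF assms(1)]
        quadratic_form_compression)
qed

lemma steklov_le_of_subspace:
  assumes "subspace W" and "dim W = k"
    and "\<And>f. f \<in> W \<Longrightarrow> f \<noteq> 0 \<Longrightarrow> rayleigh E B f \<le> c"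
  shows "steklov E B k \<le> c"
  unfolding steklov_def using assms by (intro INF_lower2[of W] SUP_least) auto

section \<open>Eigenvalues of the principal submatrix\<close>

lemma char_poly_orthogonally_diagonalized:
  fixes N :: "real Matrix.mat"
  assumes N: "N \<in> carrier_mat m m" and P: "P \<in> carrier_mat m m"
    and PtP: "transpose_mat P * P = 1\<^sub>m m" and NP: "N * P = P * mat_diag m (\<lambda>i. ds ! i)"
    and len: "length ds = m"
  shows "char_poly N = (\<Prod>d\<leftarrow>ds. [:-d, 1:])"
proof -
  let ?D = "mat_diag m (\<lambda>i. ds ! i)"
  have Pt: "transpose_mat P \<in> carrier_mat m m" using P by simp
  have PPt: "P * transpose_mat P = 1\<^sub>m m" by (rule mat_mult_left_right_inverse[OF Pt P PtP])
  have "N = N * (P * transpose_mat P)" using N PPt by simp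
  also have "\<dots> = (N * P) * transpose_mat P" using N P Pt by (simp add: assoc_mult_mat)
  also have "\<dots> = P * ?D * transpose_mat P" using NP by simp
  finally have "similar_mat_wit N ?D P (transpose_mat P)"
    unfolding similar_mat_wit_def Let_def using N P Pt PPt PtP by auto
  then have "char_poly N = char_poly ?D"
    by (intro char_poly_similar) (auto simp: similar_mat_def)
  also have "\<dots> = (\<Prod>d\<leftarrow>diag_mat ?D. [:-d, 1:])"
    by (rule char_poly_upper_triangular[of _ m]) (auto simp: mat_diag_def)
  also have "diag_mat ?D = ds"
    using len by (auto simp: diag_mat_def mat_diag_def intro: nth_equalityI)
  finally show ?thesis .
qed

lemma proots_prod_linear_factors: "proots (\<Prod>d\<leftarrow>ds. [:-d, 1:]) = mset (ds :: real list)"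
proof (induction ds)
  case (Cons d ds)
  have "(\<Prod>d\<leftarrow>ds. [:-d, 1:]) \<noteq> (0 :: real poly)" by (auto simp: prod_list_zero_iff)
  then have "proots ([:-d, 1:] * (\<Prod>d\<leftarrow>ds. [:-d, 1:]))
      = proots [:-d, 1:] + proots (\<Prod>d\<leftarrow>ds. [:-d, 1:])"
    by (intro proots_mult) auto
  then show ?case using Cons.IH proots_linear_factor[of "-d"] by simp
qed simp

lemma mat_eigenvalue_eq_nth:
  assumes "char_poly A = (\<Prod>d\<leftarrow>ds. [:-d, 1:])" and "sorted ds"
  shows "mat_eigenvalue A k = ds ! (k - 1)"
  unfolding mat_eigenvalue_def assms(1) proots_prod_linear_factors
  using assms(2) by (simp add: sorted_sort_id)

lemma distinct_set_boundary_list: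
  "distinct (boundary_list B) \<and> set (boundary_list B) = (B :: 'n::finite set)"
  unfolding boundary_list_def by (rule someI_ex) (metis finite finite_distinct_list)

lemma length_boundary_list: "length (boundary_list (B :: 'n::finite set)) = card B"
  using distinct_set_boundary_list distinct_card by metis

lemma sum_boundary_list:
  "(\<Sum>l<card B. g (boundary_list B ! l)) = (\<Sum>y\<in>(B :: 'n::finite set). g y)"
  using sum.distinct_set_conv_list[of "boundary_list B" g] distinct_set_boundary_list[of B]
  by (simp add: sum_list_sum_nth atLeast0LessThan length_boundary_list)

lemma principal_submatrix_eq:
  fixes B :: "'n::finite set"
  shows "principal_submatrix M B = Matrix.mat (card B) (card B)
     (\<lambda>(i,j). M (boundary_list B ! i) (boundary_list B ! j))"
  by (simp add: principal_submatrix_def Let_def length_boundary_list)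

definition coordinate_matrix :: "'n::finite set \<Rightarrow> (real^'n) list \<Rightarrow> real Matrix.mat" where
  "coordinate_matrix B ws =
     Matrix.mat (card B) (length ws) (\<lambda>(i,j). ws ! j $ (boundary_list B ! i))"

lemma sorted_eigenbasis_supported_on:
  assumes "sorted_eigenbasis T (supported_on B) ws ds"
  shows "length ws = card B" and "length ds = card B"
    and "\<And>j. j < card B \<Longrightarrow> ws ! j \<in> supported_on B"
  using assms sorted_eigenbasis_length[OF assms] nth_mem
  unfolding sorted_eigenbasis_def dim_supported_on by (metis subsetD)+

lemma principal_submatrix_mult_coordinate_matrix:
  assumes basis: "sorted_eigenbasis (compression M B) (supported_on B) ws ds"
  shows "principal_submatrix M B * coordinate_matrix B ws
       = coordinate_matrix B ws * mat_diag (card B) (\<lambda>j. ds ! j)"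
    (is "?N * ?P = _")
proof -
  note len = sorted_eigenbasis_supported_on[OF basis]
  have "(?N * ?P) $$ (i, j) = ?P $$ (i, j) * ds ! j" if ij: "i < card B" "j < card B" for i j
  proof -
    have "(?N * ?P) $$ (i, j) = (\<Sum>y\<in>B. M (boundary_list B ! i) y * ws ! j $ y)"
      using ij len sum_boundary_list[of "\<lambda>y. M (boundary_list B ! i) y * ws ! j $ y" B]
      by (simp add: principal_submatrix_eq coordinate_matrix_def scalar_prod_def atLeast0LessThan)
    also have "\<dots> = compression M B (ws ! j) $ (boundary_list B ! i)"
      using ij distinct_set_boundary_list[of B] nth_mem[of i "boundary_list B"]
      by (simp add: compression_def length_boundary_list)
    also have "\<dots> = ?P $$ (i, j) * ds ! j"
      using basis ij len by (simp add: sorted_eigenbasis_def coordinate_matrix_def)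
    finally show ?thesis .
  qed
  then show ?thesis
    using len by (subst mat_diag_mult_right[of _ "card B"])
      (auto simp: coordinate_matrix_def principal_submatrix_eq)
qed

lemma coordinate_matrix_orthogonal:
  assumes basis: "sorted_eigenbasis T (supported_on B) ws ds"
  shows "transpose_mat (coordinate_matrix B ws) * coordinate_matrix B ws = 1\<^sub>m (card B)"
proof (rule eq_matI)
  note len = sorted_eigenbasis_supported_on[OF basis]
  fix i j assume "i < dim_row (1\<^sub>m (card B) :: real Matrix.mat)"
    "j < dim_col (1\<^sub>m (card B) :: real Matrix.mat)"
  then have ij: "i < card B" "j < card B" by auto
  then have "(transpose_mat (coordinate_matrix B ws) * coordinate_matrix B ws) $$ (i, j)
      = inner (ws ! i) (ws ! j)"
    using len sum_boundary_list[of "\<lambda>y. ws ! i $ y * ws ! j $ y" B]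
      sum_supported_on[OF len(3), of i "\<lambda>y. ws ! j $ y"]
    by (simp add: coordinate_matrix_def scalar_prod_def atLeast0LessThan inner_vec_def)
  also have "\<dots> = (1\<^sub>m (card B) :: real Matrix.mat) $$ (i, j)"
    using sorted_eigenbasis_inner[OF basis] ij len by simp
  finally show "(transpose_mat (coordinate_matrix B ws) * coordinate_matrix B ws) $$ (i, j)
      = (1\<^sub>m (card B) :: real Matrix.mat) $$ (i, j)" .
qed (use sorted_eigenbasis_supported_on[OF assms] in \<open>auto simp: coordinate_matrix_def\<close>)

lemma char_poly_principal_submatrix:
  assumes "sorted_eigenbasis (compression M B) (supported_on B) ws ds"
  shows "char_poly (principal_submatrix M B) = (\<Prod>d\<leftarrow>ds. [:-d, 1:])"
  using sorted_eigenbasis_supported_on[OF assms]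
  by (intro char_poly_orthogonally_diagonalized[OF _ _ coordinate_matrix_orthogonal[OF assms]
        principal_submatrix_mult_coordinate_matrix[OF assms]])
     (auto simp: principal_submatrix_eq coordinate_matrix_def)

theorem mainTheorem4:
  fixes E :: "'n::finite \<Rightarrow> 'n \<Rightarrow> bool" and B :: "'n set" and k :: nat
  assumes "simple_graph E"
    and "card B \<ge> 2"
    and "1 \<le> k" and "k \<le> card B"
  shows "steklov E B k \<le> ereal (mat_eigenvalue (principal_submatrix (laplacian E) B) k)"
proof -
  have E: "symp E" using assms(1) by (rule simple_graph_symp)
  let ?T = "compression (laplacian E) B"
  obtain ws ds where basis: "sorted_eigenbasis ?T (supported_on B) ws ds"
    using sorted_eigenbasis_exists[OF linear_compression
        compression_selfadjoint[OF laplacian_symmetric[OF E]]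
        subspace_supported_on compression_supported_on] .
  have k: "k \<le> length ws"
    using sorted_eigenbasis_length[OF basis] assms(4) by (simp add: dim_supported_on)
  define W where "W = span (set (take k ws))"
  have "rayleigh E B f \<le> ereal (ds ! (k - 1))" if f: "f \<in> W" "f \<noteq> 0" for f
  proof -
    have "f \<in> supported_on B"
      using f(1) basis span_mono[OF set_take_subset] unfolding W_def sorted_eigenbasis_def by blast
    moreover have "inner f (?T f) \<le> ds ! (k - 1) * inner f f"
      using quadratic_form_le_on_span_take_sorted_eigenbasis[OF linear_compression basis assms(3) k]
        f(1) unfolding W_def by blast
    ultimately show ?thesis
      using f(2) by (simp add: rayleigh_supported_on[OF E] pos_divide_le_eq)
  qed
  then have "steklov E B k \<le> ereal (ds ! (k - 1))"
    by (intro steklov_le_of_subspace[OF _ dim_span_take_sorted_eigenbasis[OF basis k]])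
       (auto simp: W_def)
  also have "ds ! (k - 1) = mat_eigenvalue (principal_submatrix (laplacian E) B) k"
    using char_poly_principal_submatrix[OF basis] basis unfolding sorted_eigenbasis_def
    by (simp add: mat_eigenvalue_eq_nth)
  finally show ?thesis .
qed

end
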